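(* There is no algorithm that preprocesses an algebraic equation $P$ in polynomial time and subsequently decides, in time sublinear in $|P|$, whether a given assignment $A$ is a root of $P$; i.e., $\mathrm{AERP}\notin$ PsT.
   Context: A decision problem is a set of pairs $\langle D,P\rangle$ of strings (data part $D$, problem part $P$). AERP (Algebraic Equation Root Problem): data part is a polynomial (algebraic) equation $P$ with integer coefficients in variables $x_1,\dots,x_d$, problem part is an assignment $A=(a_1,\dots,a_d)$; the pair is in AERP iff $A$ is a root of $P$. A random-access Turing machine (RATM) is a multitape Turing machine with a read-only input tape and work tapes, each with an associated binary index tape, and a special random-access state that in one step moves each non-index tape head to the cell addressed by its index tape. PsT is the class of decision problems $\mathcal{P}$ for which there exist a polynomial-time computable function $\Pi$ and an RATM $M$ such that for every pair $\langle D,P\rangle$, $M$ on input $(\Pi(D),P)$ decides whether $\langle D,P\rangle\in\mathcal{P}$ in time $o(|D|)$. *)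

theory Defs
  imports Main "HOL-Library.Landau_Symbols"
begin

text \<open>Strings are binary ('bool list'). Decision problems are sets of pairs
  (data part, problem part).\<close>

type_synonym bstring = "bool list"
type_synonym decision_problem = "(bstring \<times> bstring) set"

fun nat_bits :: "nat \<Rightarrow> bool list" where
  "nat_bits n = (if n = 0 then [] else odd n # nat_bits (n div 2))"

text \<open>Self-delimiting encoding: every bit is doubled, the terminator is 01.\<close>
definition dbl :: "bool list \<Rightarrow> bool list" where
  "dbl bs = concat (map (\<lambda>b. [b, b]) bs) @ [False, True]"

definition enc_nat :: "nat \<Rightarrow> bstring" where
  "enc_nat n = dbl (nat_bits n)"

definition enc_int :: "int \<Rightarrow> bstring" where
  "enc_int i = (i < 0) # enc_nat (nat \<bar>i\<bar>)"

definition enc_list :: "('a \<Rightarrow> bstring) \<Rightarrow> 'a list \<Rightarrow> bstring" where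
  "enc_list f xs = enc_nat (length xs) @ concat (map f xs)"

text \<open>An algebraic equation \<open>p(x_1,...,x_d) = 0\<close> with integer coefficients is
  given by the number of variables d and a list of monomials (coefficient,
  exponent vector of length d).\<close>
type_synonym alg_eq = "nat \<times> (int \<times> nat list) list"

definition wf_eq :: "alg_eq \<Rightarrow> bool" where
  "wf_eq E = (\<forall>m \<in> set (snd E). length (snd m) = fst E)"

definition enc_eq :: "alg_eq \<Rightarrow> bstring" where
  "enc_eq E = enc_nat (fst E) @
     enc_list (\<lambda>(c, es). enc_int c @ concat (map enc_nat es)) (snd E)"

definition enc_assign :: "int list \<Rightarrow> bstring" where
  "enc_assign A = enc_list enc_int A"

definition eval_eq :: "alg_eq \<Rightarrow> int list \<Rightarrow> int" where
  "eval_eq E A = sum_list (map (\<lambda>(c, es). c * (\<Prod>i<fst E. (A ! i) ^ (es ! i))) (snd E))"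

definition AERP :: decision_problem where
  "AERP = {(enc_eq E, enc_assign A) | E A.
             wf_eq E \<and> length A = fst E \<and> eval_eq E A = 0}"

text \<open>Tape symbols are naturals below nsyms; 0 is the blank, 1/2 encode the bits
  0/1, 3 is a separator. With k work tapes there are m = 2(k+1) tapes:
  tape 0 is the read-only input tape, tapes 1..k are work tapes, and tape
  k+1+j is the (binary, least significant bit in cell 0) index tape of tape j.
  Cells are indexed by naturals; a head moving left from cell 0 stays there. In the random-access state, every
  non-index head jumps to the cell addressed by its index tape and control
  passes to state raret.\<close>

record ratm =
  nstates :: nat
  nsyms :: nat
  nwork :: nat
  start :: nat
  acc :: nat
  rej :: nat
  rastate :: nat
  raret :: nat
  delta :: "nat \<Rightarrow> nat list \<Rightarrow> nat \<times> nat list \<times> int list"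

definition ntapes :: "ratm \<Rightarrow> nat" where
  "ntapes M = 2 * (nwork M + 1)"

definition wf_ratm :: "ratm \<Rightarrow> bool" where
  "wf_ratm M = (4 \<le> nsyms M \<and>
     start M < nstates M \<and> acc M < nstates M \<and> rej M < nstates M \<and>
     rastate M < nstates M \<and> raret M < nstates M \<and>
     acc M \<noteq> rej M \<and> rastate M \<noteq> acc M \<and> rastate M \<noteq> rej M \<and>
     (\<forall>q < nstates M. \<forall>syms. length syms = ntapes M \<and> (\<forall>s \<in> set syms. s < nsyms M) \<longrightarrow>
        (case delta M q syms of (q', w, mv) \<Rightarrow>
           q' < nstates M \<and> length w = ntapes M \<and> (\<forall>s \<in> set w. s < nsyms M) \<and>
           length mv = ntapes M \<and> set mv \<subseteq> {-1, 0, 1})))"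

type_synonym config = "nat \<times> (nat \<Rightarrow> nat) list \<times> nat list"

definition addr :: "(nat \<Rightarrow> nat) \<Rightarrow> nat" where
  "addr t = (let L = (LEAST i. t i \<notin> {1, 2}) in
             \<Sum>i<L. (if t i = 2 then 2 ^ i else 0))"

definition step :: "ratm \<Rightarrow> config \<Rightarrow> config" where
  "step M c = (case c of (q, ts, hs) \<Rightarrow>
     (if q = acc M \<or> q = rej M then (q, ts, hs)
      else if q = rastate M then
        (raret M, ts,
         map (\<lambda>j. if j \<le> nwork M then addr (ts ! (nwork M + 1 + j)) else hs ! j) [0..<ntapes M])
      else (case delta M q (map (\<lambda>j. (ts ! j) (hs ! j)) [0..<ntapes M]) of (q', w, mv) \<Rightarrow>
        (q',
         map (\<lambda>j. if j = 0 then ts ! j else (ts ! j)((hs ! j) := w ! j)) [0..<ntapes M],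
         map (\<lambda>j. nat (int (hs ! j) + mv ! j)) [0..<ntapes M]))))"

definition init_config :: "ratm \<Rightarrow> nat list \<Rightarrow> config" where
  "init_config M inp =
     (start M, (\<lambda>i. if i < length inp then inp ! i else 0) # replicate (ntapes M - 1) (\<lambda>_. 0),
      replicate (ntapes M) 0)"

definition run :: "ratm \<Rightarrow> nat \<Rightarrow> config \<Rightarrow> config" where
  "run M n c = (step M ^^ n) c"

definition sym :: "bool \<Rightarrow> nat" where
  "sym b = (if b then 2 else 1)"

definition decides_within :: "ratm \<Rightarrow> nat list \<Rightarrow> nat \<Rightarrow> bool \<Rightarrow> bool" where
  "decides_within M inp t ans =
     (case run M t (init_config M inp) of (q, _, _) \<Rightarrow>
        (q = acc M \<or> q = rej M) \<and> (q = acc M \<longleftrightarrow> ans))"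

definition poly_time_computable :: "(bstring \<Rightarrow> bstring) \<Rightarrow> bool" where
  "poly_time_computable f = (\<exists>M c e. wf_ratm M \<and> 1 \<le> nwork M \<and>
     (\<forall>w. case run M (c * (length w + 1) ^ e) (init_config M (map sym w)) of (q, ts, _) \<Rightarrow>
        q = acc M \<and> (\<forall>i < length (f w). (ts ! 1) i = sym (f w ! i)) \<and>
        (ts ! 1) (length (f w)) = 0))"

definition pair_input :: "bstring \<Rightarrow> bstring \<Rightarrow> nat list" where
  "pair_input X P = map sym X @ [3] @ map sym P"

definition PsT :: "decision_problem set" where
  "PsT = {Prob. \<exists>Pi M T. poly_time_computable Pi \<and> wf_ratm M \<and>
            (\<lambda>n. real (T n)) \<in> o(\<lambda>n. real n) \<and>
            (\<forall>D P. decides_within M (pair_input (Pi D) P) (T (length D)) ((D, P) \<in> Prob))}"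

end

theory Submission
  imports Defs
begin

text \<open>The running time of a PsT algorithm is bounded in terms of the data part alone, so for the
  trivial equation \<open>0 = 0\<close> in one variable the machine reads only boundedly many cells of the
  assignment. Take the assignment \<open>2^t\<close>, whose code has more than \<open>t\<close> bits, and flip a bit the
  input head never visits: the machine cannot notice, yet one of its two doubled bits no longer
  agrees with its partner, so the flipped string encodes no assignment and the pair leaves AERP.\<close>

declare nat_bits.simps [simp del]

lemma nat_bits_0 [simp]: "nat_bits 0 = []"
  by (subst nat_bits.simps) simp

lemma nat_bits_pos: "n > 0 \<Longrightarrow> nat_bits n = odd n # nat_bits (n div 2)"
  by (subst nat_bits.simps) simp

lemma length_nat_bits_gt: "2 ^ k \<le> n \<Longrightarrow> k < length (nat_bits n)"
proof (induction k arbitrary: n)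
  case 0
  then show ?case by (simp add: nat_bits_pos)
next
  case (Suc k)
  then have "2 ^ k \<le> n div 2" by (simp add: le_div_geq)
  moreover have "n > 0" using Suc.prems by (metis not_gr0 le_0_eq power_not_zero zero_neq_numeral)
  ultimately show ?case using Suc.IH by (simp add: nat_bits_pos)
qed

lemma nat_bits_inj: "nat_bits n = nat_bits m \<Longrightarrow> n = m"
proof (induction n arbitrary: m rule: less_induct)
  case (less n)
  show ?case
  proof (cases "n = 0 \<or> m = 0")
    case True
    with less.prems show ?thesis by (metis nat_bits_0 nat_bits_pos neq_Nil_conv not_gr0)
  next
    case False
    with less.prems have "odd n = odd m" "nat_bits (n div 2) = nat_bits (m div 2)"
      by (auto simp: nat_bits_pos)
    with less.IH[of "n div 2"] False have "n div 2 = m div 2" "odd n = odd m" by auto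
    then show ?thesis by (metis div_mult_mod_eq odd_iff_mod_2_eq_one not_mod_2_eq_1_eq_0)
  qed
qed

lemma dbl_Nil [simp]: "dbl [] = [False, True]"
  by (simp add: dbl_def)

lemma dbl_Cons [simp]: "dbl (x # xs) = x # x # dbl xs"
  by (simp add: dbl_def)

lemma length_dbl: "length (dbl xs) = 2 * length xs + 2"
  by (induction xs) auto

lemma nth_dbl: "i < 2 * length xs \<Longrightarrow> dbl xs ! i = xs ! (i div 2)"
proof (induction xs arbitrary: i)
  case (Cons x xs)
  then show ?case by (cases i; cases "i - 1") (auto simp: nth_Cons')
qed simp

lemma dbl_append_eq_dbl_appendD: "dbl xs @ r = dbl ys @ r' \<Longrightarrow> xs = ys"
  by (induction xs arbitrary: ys) (case_tac ys; auto)+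

lemma enc_nat_append_eq_enc_nat_appendD: "enc_nat n @ r = enc_nat m @ r' \<Longrightarrow> n = m"
  unfolding enc_nat_def by (metis dbl_append_eq_dbl_appendD nat_bits_inj)

text \<open>Bits \<open>j\<close> and \<open>j xor 1\<close> of a doubled code agree; flipping one of them breaks this.\<close>
lemma dbl_flip_neq_dbl:
  assumes "j < 2 * length bs"
  shows "(dbl bs)[j := \<not> dbl bs ! j] \<noteq> dbl cs"
proof
  assume flip: "(dbl bs)[j := \<not> dbl bs ! j] = dbl cs"
  have "length cs = length bs"
    using arg_cong[OF flip, of length] by (simp add: length_dbl)
  define j' where "j' = (if even j then j + 1 else j - 1)"
  have j': "j' < 2 * length bs" "j' \<noteq> j" "j' div 2 = j div 2"
    using assms unfolding j'_def by (auto elim!: evenE oddE)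
  have "dbl cs ! j = dbl cs ! j'"
    using nth_dbl[of j cs] nth_dbl[of j' cs] assms j' \<open>length cs = length bs\<close> by simp
  moreover have "dbl bs ! j = dbl bs ! j'"
    using nth_dbl[of j bs] nth_dbl[of j' bs] assms j' by simp
  ultimately show False
    using flip assms j' by (metis length_dbl length_list_update nth_list_update_eq
        nth_list_update_neq trans_less_add1)
qed

lemma enc_assign_singleton: "enc_assign [a] = enc_nat 1 @ enc_int a"
  by (simp add: enc_assign_def enc_list_def)

lemma enc_assign_singleton_in_AERP: "(enc_eq (1, []), enc_assign [a]) \<in> AERP"
  unfolding AERP_def
  by (auto simp: wf_eq_def eval_eq_def intro!: exI[of _ "(1, [])"] exI[of _ "[a]"])

lemma AERP_one_variable_problem:
  assumes "(enc_eq (1, ms), P) \<in> AERP"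
  shows "\<exists>a. P = enc_nat 1 @ enc_int a"
proof -
  from assms obtain E A where "enc_eq (1, ms) = enc_eq E" "P = enc_assign A" "length A = fst E"
    unfolding AERP_def by auto
  moreover from \<open>enc_eq (1, ms) = enc_eq E\<close> have "fst E = 1"
    unfolding enc_eq_def by (metis enc_nat_append_eq_enc_nat_appendD fst_conv)
  ultimately obtain a where "P = enc_assign [a]" by (cases A) auto
  then show ?thesis using enc_assign_singleton by blast
qed

lemma flipped_assignment_notin_AERP:
  assumes "j < 2 * length bs"
  shows "(enc_eq (1, ms), enc_nat 1 @ False # (dbl bs)[j := \<not> dbl bs ! j]) \<notin> AERP"
proof
  assume "(enc_eq (1, ms), enc_nat 1 @ False # (dbl bs)[j := \<not> dbl bs ! j]) \<in> AERP"
  then obtain a where "False # (dbl bs)[j := \<not> dbl bs ! j] = enc_int a"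
    using AERP_one_variable_problem by fastforce
  then have "(dbl bs)[j := \<not> dbl bs ! j] = dbl (nat_bits (nat \<bar>a\<bar>))"
    by (simp add: enc_int_def enc_nat_def)
  with dbl_flip_neq_dbl[OF assms] show False by blast
qed

definition with_input_tape :: "(nat \<Rightarrow> nat) \<Rightarrow> config \<Rightarrow> config" where
  "with_input_tape f c = (fst c, (fst (snd c))[0 := f], snd (snd c))"

lemma ntapes_pos: "0 < ntapes M"
  by (simp add: ntapes_def)

lemma run_Suc: "run M (Suc n) c = step M (run M n c)"
  by (simp add: run_def)

lemma step_preserves_input_tape:
  assumes "length ts = ntapes M"
  shows "length (fst (snd (step M (q, ts, hs)))) = ntapes M \<and>
         fst (snd (step M (q, ts, hs))) ! 0 = ts ! 0"
  using assms ntapes_pos[of M] unfolding step_def by (auto split: prod.splits)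

lemma run_preserves_input_tape:
  assumes "length (fst (snd c)) = ntapes M"
  shows "length (fst (snd (run M n c))) = ntapes M \<and> fst (snd (run M n c)) ! 0 = fst (snd c) ! 0"
proof (induction n)
  case 0
  then show ?case using assms by (simp add: run_def)
next
  case (Suc n)
  obtain q ts hs where "run M n c = (q, ts, hs)" by (cases "run M n c") auto
  with Suc step_preserves_input_tape[of ts M q hs] show ?case by (simp add: run_Suc)
qed

text \<open>A step only reads the input tape under its head, so replacing the input tape by one that
  agrees there commutes with the step.\<close>
lemma step_with_input_tape:
  assumes len: "length ts = ntapes M" and read: "f (hs ! 0) = (ts ! 0) (hs ! 0)"
  shows "step M (q, ts[0 := f], hs) = with_input_tape f (step M (q, ts, hs))"
proof -
  have read_syms: "map (\<lambda>j. (ts[0 := f] ! j) (hs ! j)) [0..<ntapes M] =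
      map (\<lambda>j. (ts ! j) (hs ! j)) [0..<ntapes M]"
    using read len by (auto simp: nth_list_update)
  have jump: "map (\<lambda>j. if j \<le> nwork M then addr (ts[0 := f] ! (nwork M + 1 + j)) else hs ! j) [0..<ntapes M]
      = map (\<lambda>j. if j \<le> nwork M then addr (ts ! (nwork M + 1 + j)) else hs ! j) [0..<ntapes M]"
    by (auto simp: nth_list_update)
  have write_tapes: "\<And>w. map (\<lambda>j. if j = 0 then ts[0 := f] ! j else (ts[0 := f] ! j)((hs ! j) := w ! j)) [0..<ntapes M]
      = (map (\<lambda>j. if j = 0 then ts ! j else (ts ! j)((hs ! j) := w ! j)) [0..<ntapes M])[0 := f]"
    using len ntapes_pos[of M] by (intro nth_equalityI) (auto simp: nth_list_update)
  show ?thesis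
    unfolding step_def with_input_tape_def using len ntapes_pos[of M]
    by (auto simp: read_syms jump write_tapes split: prod.splits)
qed

lemma run_with_input_tape:
  assumes len: "length (fst (snd c)) = ntapes M"
    and read: "\<And>k. k < n \<Longrightarrow>
      f (snd (snd (run M k c)) ! 0) = (fst (snd c) ! 0) (snd (snd (run M k c)) ! 0)"
  shows "run M n (with_input_tape f c) = with_input_tape f (run M n c)"
  using read
proof (induction n)
  case 0
  then show ?case by (simp add: run_def)
next
  case (Suc n)
  obtain q ts hs where run_n: "run M n c = (q, ts, hs)" by (cases "run M n c") auto
  have tapes: "length ts = ntapes M" "ts ! 0 = fst (snd c) ! 0"
    using run_preserves_input_tape[OF len, of n] run_n by auto
  with Suc.prems[of n] run_n have "f (hs ! 0) = (ts ! 0) (hs ! 0)" by simp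
  with Suc step_with_input_tape[OF tapes(1)] show ?case
    by (simp add: run_Suc run_n with_input_tape_def)
qed

lemma init_config_input_update:
  assumes "p < length inp"
  shows "init_config M (inp[p := s]) =
    with_input_tape (\<lambda>i. if i < length inp then inp[p := s] ! i else 0) (init_config M inp)"
  unfolding init_config_def with_input_tape_def
  by (cases "ntapes M") (simp_all add: ntapes_def)

lemma run_input_update_unvisited:
  assumes "p < length inp" and unvisited: "\<forall>k<t. snd (snd (run M k (init_config M inp))) ! 0 \<noteq> p"
  shows "fst (run M t (init_config M (inp[p := s]))) = fst (run M t (init_config M inp))"
proof -
  let ?c = "init_config M inp"
  let ?f = "\<lambda>i. if i < length inp then inp[p := s] ! i else 0"
  have len: "length (fst (snd ?c)) = ntapes M"
    unfolding init_config_def using ntapes_pos[of M] by simp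
  have "run M t (with_input_tape ?f ?c) = with_input_tape ?f (run M t ?c)"
  proof (rule run_with_input_tape[OF len])
    fix k assume "k < t"
    with unvisited have "p \<noteq> snd (snd (run M k ?c)) ! 0" by auto
    then show "?f (snd (snd (run M k ?c)) ! 0) = (fst (snd ?c) ! 0) (snd (snd (run M k ?c)) ! 0)"
      by (simp add: init_config_def)
  qed
  then show ?thesis
    by (simp add: init_config_input_update[OF assms(1)] with_input_tape_def)
qed

lemma decides_within_input_update_unvisited:
  assumes "decides_within M inp t ans" "decides_within M (inp[p := s]) t ans'"
    and "p < length inp" "\<forall>k<t. snd (snd (run M k (init_config M inp))) ! 0 \<noteq> p"
  shows "ans = ans'"
  using assms run_input_update_unvisited[OF assms(3,4), of s]
  unfolding decides_within_def by (auto split: prod.splits)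

lemma exists_unvisited_cell:
  fixes g :: "nat \<Rightarrow> nat"
  assumes "t < n"
  shows "\<exists>j<n. \<forall>k<t. g k \<noteq> base + j"
proof (rule ccontr)
  assume "\<not> ?thesis"
  then have "(\<lambda>j. base + j) ` {..<n} \<subseteq> g ` {..<t}" by force
  then have "card ((\<lambda>j. base + j) ` {..<n}) \<le> card (g ` {..<t})"
    by (simp add: card_mono)
  then have "n \<le> t"
    using card_image_le[of "{..<t}" g] by (simp add: card_image)
  with assms show False by simp
qed

theorem mainTheorem5:
  shows "AERP \<notin> PsT"
proof
  assume "AERP \<in> PsT"
  then obtain Pi M T where dec: "\<And>D P. decides_within M (pair_input (Pi D) P) (T (length D)) ((D, P) \<in> AERP)"
    unfolding PsT_def by blast
  define D where "D = enc_eq (1, [])"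
  define t where "t = T (length D)"
  define bs where "bs = nat_bits (2 ^ t)"
  define inp where "inp = pair_input (Pi D) (enc_assign [2 ^ t])"
  define base where "base = length (Pi D) + 1 + length (enc_nat 1) + 1"
  have "t < 2 * length bs" using length_nat_bits_gt[of t "2 ^ t"] unfolding bs_def by simp
  then obtain j where j: "j < 2 * length bs"
    and unvisited: "\<forall>k<t. snd (snd (run M k (init_config M inp))) ! 0 \<noteq> base + j"
    using exists_unvisited_cell[of t "2 * length bs" "\<lambda>k. snd (snd (run M k (init_config M inp))) ! 0"]
    by blast
  have enc: "enc_assign [2 ^ t] = enc_nat 1 @ False # dbl bs"
    by (simp add: enc_assign_singleton enc_int_def enc_nat_def bs_def nat_power_eq)
  have "inp[base + j := sym (\<not> dbl bs ! j)] =
      pair_input (Pi D) (enc_nat 1 @ False # (dbl bs)[j := \<not> dbl bs ! j])"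
    unfolding inp_def enc pair_input_def base_def by (simp add: list_update_append map_update)
  then have "decides_within M (inp[base + j := sym (\<not> dbl bs ! j)]) t False"
    using dec[of D "enc_nat 1 @ False # (dbl bs)[j := \<not> dbl bs ! j]"]
      flipped_assignment_notin_AERP[OF j, of "[]"] unfolding t_def D_def by simp
  moreover have "decides_within M inp t True"
    using dec[of D "enc_assign [2 ^ t]"] enc_assign_singleton_in_AERP
    unfolding inp_def t_def D_def by simp
  moreover have "base + j < length inp"
    using j by (simp add: inp_def enc pair_input_def base_def length_dbl)
  ultimately show False
    using decides_within_input_update_unvisited[of M inp t True _ _ False] unvisited by blast
qed

end
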